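(* Let $a, b \ge 2$ be integers and let $R_{a,b} = \{C_{i,j} : 1 \le i \le a,\ 1 \le j \le b\}$ be the rectangular polyomino of size $n = ab$. Then on the $ab \times ab$ board, $$\mathrm{cp}_{\mathrm{fixed}}(R_{a,b}) = \left\lceil \frac{ab-a+1}{2a-1} \right\rceil \left\lceil \frac{ab-b+1}{2b-1} \right\rceil.$$
   Context: For integers $i,j$, $C_{i,j}$ denotes the unit square cell in column $i$ and row $j$ of the integer grid (columns numbered left to right, rows numbered top to bottom). A polyomino is a finite set of cells; its size is its number of cells. For a polyomino $\mathcal{P}$ of size $n$ the board is $\mathbb{B} = \{C_{i,j} : 1 \le i,j \le n\}$. The shift of $\mathcal{P}$ by integers $(c,d)$ is $\mathcal{P}+(c,d) = \{C_{x+c,y+d} : C_{x,y} \in \mathcal{P}\}$; a fixed copy of $\mathcal{P}$ is any shift of $\mathcal{P}$ (no rotations). A set of polyominoes is a valid arrangement if each is contained in $\mathbb{B}$ and they are pairwise disjoint. A fixed packing of $\mathcal{P}$ is a set of fixed copies of $\mathcal{P}$ forming a valid arrangement such that adding any further fixed copy of $\mathcal{P}$ yields an invalid arrangement. The clumsy fixed packing number $\mathrm{cp}_{\mathrm{fixed}}(\mathcal{P})$ is the minimum number of polyominoes in a fixed packing of $\mathcal{P}$ on the $n \times n$ board. *)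

theory Defs
  imports Complex_Main
begin

type_synonym cell = "int \<times> int"  (* (i, j) = C_{i,j}: column i, row j *)

definition shift :: "cell set \<Rightarrow> int \<Rightarrow> int \<Rightarrow> cell set" where
  "shift P c d = (\<lambda>(x, y). (x + c, y + d)) ` P"

definition board :: "nat \<Rightarrow> cell set" where
  "board n = {1..int n} \<times> {1..int n}"

definition valid_arrangement :: "nat \<Rightarrow> cell set set \<Rightarrow> bool" where
  "valid_arrangement n S \<longleftrightarrow>
     (\<forall>Q\<in>S. Q \<subseteq> board n) \<and> (\<forall>Q\<in>S. \<forall>R\<in>S. Q \<noteq> R \<longrightarrow> Q \<inter> R = {})"

definition fixed_packing :: "nat \<Rightarrow> cell set \<Rightarrow> cell set set \<Rightarrow> bool" where
  "fixed_packing n P S \<longleftrightarrow>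
     (\<forall>Q\<in>S. \<exists>c d. Q = shift P c d) \<and> valid_arrangement n S \<and>
     (\<forall>c d. shift P c d \<notin> S \<longrightarrow> \<not> valid_arrangement n (insert (shift P c d) S))"

definition cp_fixed :: "cell set \<Rightarrow> nat" where
  "cp_fixed P = (LEAST k. \<exists>S. fixed_packing (card P) P S \<and> card S = k)"

definition rect :: "nat \<Rightarrow> nat \<Rightarrow> cell set" where
  "rect a b = {1..int a} \<times> {1..int b}"

end

theory Submission
  imports Defs
begin

text \<open>
  A copy of the a \<times> b rectangle at offset (c, d) lies on the n \<times> n board iff 0 \<le> c \<le> n - a
  and 0 \<le> d \<le> n - b, and two copies overlap iff their offsets differ by less than a in the
  first and by less than b in the second coordinate, so the problem factors into two
  one-dimensional ones. With K = 2a - 1 and K' = 2b - 1, a fixed packing meets every copy on the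
  board (otherwise that copy could be added), in particular those at offsets (iK, jK') with
  0 \<le> i \<le> (n - a) div K and 0 \<le> j \<le> (n - b) div K'; no placed copy meets two of them, because
  an offset is closer than a to at most one multiple of K. Conversely, (n - a) div K + 1 segments
  of length a separated by gaps of a - 1 cells block every offset of the strip, and the products
  of two such families form a fixed packing. Finally (n - a) div K + 1 = \<lceil>(n - a + 1)/K\<rceil>.
\<close>

lemma shift_eq_empty_iff [simp]: "shift P c d = {} \<longleftrightarrow> P = {}"
  unfolding shift_def by simp

lemma shift_rect: "shift (rect a b) c d = {c + 1..c + int a} \<times> {d + 1..d + int b}"
proof -
  have "shift (rect a b) c d = map_prod (\<lambda>x. x + c) (\<lambda>y. y + d) ` rect a b"
    unfolding shift_def map_prod_def by simp
  also have "\<dots> = {c + 1..c + int a} \<times> {d + 1..d + int b}"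
    unfolding rect_def by (rule map_prod_surj_on) (simp_all add: add.commute)
  finally show ?thesis .
qed

lemma shift_rect_disjoint_iff:
  assumes "1 \<le> a" "1 \<le> b"
  shows "shift (rect a b) c d \<inter> shift (rect a b) c' d' = {} \<longleftrightarrow>
    int a \<le> \<bar>c - c'\<bar> \<or> int b \<le> \<bar>d - d'\<bar>"
proof -
  have "shift (rect a b) c d \<inter> shift (rect a b) c' d' =
    {max c c' + 1..min c c' + int a} \<times> {max d d' + 1..min d d' + int b}"
    unfolding shift_rect by auto
  then show ?thesis by (auto simp: abs_if)
qed

lemma shift_rect_subset_board_iff:
  assumes "1 \<le> a" "1 \<le> b"
  shows "shift (rect a b) c d \<subseteq> board n \<longleftrightarrow>
    0 \<le> c \<and> c \<le> int n - int a \<and> 0 \<le> d \<and> d \<le> int n - int b"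
  using assms by (auto simp: shift_rect board_def times_subset_iff)

lemma rect_eq_empty_iff [simp]: "rect a b = {} \<longleftrightarrow> a = 0 \<or> b = 0"
  unfolding rect_def by auto

lemma card_rect: "card (rect a b) = a * b"
  unfolding rect_def by (simp add: card_cartesian_product)

lemma finite_valid_arrangement: "valid_arrangement n S \<Longrightarrow> finite S"
  unfolding valid_arrangement_def board_def
  by (metis Pow_iff finite_Pow_iff finite_SigmaI finite_atLeastAtMost_int finite_subset subsetI)

lemma valid_arrangement_insert:
  assumes "X \<notin> S"
  shows "valid_arrangement n (insert X S) \<longleftrightarrow>
    X \<subseteq> board n \<and> valid_arrangement n S \<and> (\<forall>Q\<in>S. Q \<inter> X = {})"
  using assms unfolding valid_arrangement_def by (auto simp: Int_commute) blast+

lemma fixed_packing_iff_blocking: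
  assumes "P \<noteq> {}"
  shows "fixed_packing n P S \<longleftrightarrow>
    (\<forall>Q\<in>S. \<exists>c d. Q = shift P c d) \<and> valid_arrangement n S \<and>
    (\<forall>c d. shift P c d \<subseteq> board n \<longrightarrow> (\<exists>Q\<in>S. Q \<inter> shift P c d \<noteq> {}))"
  using assms unfolding fixed_packing_def
  by (metis Int_absorb shift_eq_empty_iff valid_arrangement_insert)

lemma mult_le_of_le_div:
  fixes i K L :: int
  assumes "0 < K" "i \<le> L div K"
  shows "i * K \<le> L"
proof -
  have "i * K \<le> L div K * K" using assms by (simp add: mult_right_mono)
  also have "\<dots> \<le> L" using assms(1) by (simp add: minus_mod_eq_div_mult [symmetric])
  finally show ?thesis .
qed

lemma ceiling_of_int_succ_divide:
  fixes L K :: int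
  assumes "0 < K"
  shows "\<lceil>real_of_int (L + 1) / of_int K\<rceil> = L div K + 1"
proof (rule ceiling_unique)
  have "L div K * K + L mod K = L" by (rule div_mult_mod_eq)
  moreover have "0 \<le> L mod K" "L mod K < K" using assms by simp_all
  ultimately have "L div K * K < L + 1" "L + 1 \<le> L div K * K + K"
    by linarith+
  then have "L div K * K < L + 1" "L + 1 \<le> (L div K + 1) * K"
    by (simp_all add: distrib_right)
  then have "real_of_int (L div K) * of_int K < of_int (L + 1)"
    "of_int (L + 1) \<le> real_of_int (L div K + 1) * of_int K"
    by (simp_all only: of_int_mult [symmetric] of_int_less_iff of_int_le_iff)
  then show "of_int (L div K + 1) - 1 < real_of_int (L + 1) / of_int K"
    "real_of_int (L + 1) / of_int K \<le> of_int (L div K + 1)"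
    using assms by (simp_all add: pos_less_divide_eq pos_divide_le_eq)
qed

lemma near_multiple_unique:
  fixes A c i j :: int
  assumes "\<bar>c - i * (2 * A - 1)\<bar> < A" "\<bar>c - j * (2 * A - 1)\<bar> < A"
  shows "i = j"
proof (rule ccontr)
  assume "i \<noteq> j"
  have K: "0 \<le> 2 * A - 1" using assms by linarith
  have "1 * (2 * A - 1) \<le> \<bar>i - j\<bar> * (2 * A - 1)"
    using \<open>i \<noteq> j\<close> K by (intro mult_right_mono) auto
  also have "\<dots> = \<bar>i * (2 * A - 1) - j * (2 * A - 1)\<bar>"
    using K by (simp add: abs_mult flip: left_diff_distrib)
  also have "\<dots> < 2 * A - 1" using assms by linarith
  finally show False by simp
qed

text \<open>
  Offsets 0..L of segments of length A: segments separated by gaps of A - 1 cells, the first one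
  after such a gap and the last one pushed against the end of the strip, so no further one fits.
\<close>
definition clumsy_offset :: "int \<Rightarrow> int \<Rightarrow> int \<Rightarrow> int" where
  "clumsy_offset A L i = min (i * (2 * A - 1) + A - 1) L"

lemma clumsy_offset_bounds:
  assumes "1 \<le> A" "0 \<le> L" "0 \<le> i"
  shows "0 \<le> clumsy_offset A L i \<and> clumsy_offset A L i \<le> L"
proof -
  have "0 \<le> i * (2 * A - 1)" using assms by simp
  then have "0 \<le> min (i * (2 * A - 1) + A - 1) L"
    using assms by (intro min.boundedI) linarith+
  then show ?thesis unfolding clumsy_offset_def by simp
qed

lemma clumsy_offset_gap:
  assumes "1 \<le> A" "0 \<le> i" "i < j" "j \<le> L div (2 * A - 1)"
  shows "A \<le> clumsy_offset A L j - clumsy_offset A L i"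
proof -
  have "i * (2 * A - 1) + (2 * A - 1) = (i + 1) * (2 * A - 1)"
    by (simp add: algebra_simps)
  also have "\<dots> \<le> j * (2 * A - 1)"
    using assms by (intro mult_right_mono) auto
  finally have "i * (2 * A - 1) + (2 * A - 1) \<le> j * (2 * A - 1)" .
  moreover have "j * (2 * A - 1) \<le> L"
    using assms by (intro mult_le_of_le_div) auto
  ultimately show ?thesis using assms unfolding clumsy_offset_def min_def by auto
qed

lemma clumsy_offset_separated:
  assumes "1 \<le> A" "i \<in> {0..L div (2 * A - 1)}" "j \<in> {0..L div (2 * A - 1)}" "i \<noteq> j"
  shows "A \<le> \<bar>clumsy_offset A L i - clumsy_offset A L j\<bar>"
  using assms clumsy_offset_gap [of A i j L] clumsy_offset_gap [of A j i L]
  by (cases "i < j") auto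

lemma clumsy_offset_near:
  assumes "1 \<le> A" "c \<le> L"
  shows "\<bar>c - clumsy_offset A L (c div (2 * A - 1))\<bar> < A"
proof -
  have "c div (2 * A - 1) * (2 * A - 1) + c mod (2 * A - 1) = c"
    by (rule div_mult_mod_eq)
  moreover have "0 \<le> c mod (2 * A - 1)" "c mod (2 * A - 1) < 2 * A - 1"
    using assms by simp_all
  ultimately have "c div (2 * A - 1) * (2 * A - 1) \<le> c"
    "c < c div (2 * A - 1) * (2 * A - 1) + (2 * A - 1)"
    by linarith+
  then show ?thesis using assms unfolding clumsy_offset_def min_def by auto
qed

text \<open>Indices both of the witness offsets i(2a - 1) and of the clumsy segments in a strip of length n.\<close>
definition slots :: "nat \<Rightarrow> nat \<Rightarrow> int set" where
  "slots n a = {0..(int n - int a) div (2 * int a - 1)}"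

lemma card_slots_le_card_fixed_packing_rect:
  assumes a: "1 \<le> a" and b: "1 \<le> b" and S: "fixed_packing n (rect a b) S"
  shows "card (slots n a \<times> slots n b) \<le> card S"
proof -
  let ?I = "slots n a \<times> slots n b"
  define witness where
    "witness = (\<lambda>(i, j). shift (rect a b) (i * (2 * int a - 1)) (j * (2 * int b - 1)))"
  have "rect a b \<noteq> {}" using a b by simp
  then have shifts: "\<forall>Q\<in>S. \<exists>c d. Q = shift (rect a b) c d"
    and blocking: "\<And>c d. shift (rect a b) c d \<subseteq> board n \<Longrightarrow>
      \<exists>Q\<in>S. Q \<inter> shift (rect a b) c d \<noteq> {}"
    and "valid_arrangement n S"
    using S unfolding fixed_packing_iff_blocking [OF \<open>rect a b \<noteq> {}\<close>] by blast+
  have "\<exists>Q\<in>S. Q \<inter> witness u \<noteq> {}" if "u \<in> ?I" for u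
  proof -
    obtain i j where u: "u = (i, j)" "i \<in> slots n a" "j \<in> slots n b" using \<open>u \<in> ?I\<close> by blast
    then have "0 \<le> i * (2 * int a - 1)" "i * (2 * int a - 1) \<le> int n - int a"
      "0 \<le> j * (2 * int b - 1)" "j * (2 * int b - 1) \<le> int n - int b"
      using a b by (auto simp: slots_def intro: mult_le_of_le_div)
    then show ?thesis
      unfolding u witness_def using blocking shift_rect_subset_board_iff [OF a b] by simp
  qed
  then obtain f where f: "\<And>u. u \<in> ?I \<Longrightarrow> f u \<in> S \<and> f u \<inter> witness u \<noteq> {}"
    by metis
  have "inj_on f ?I"
  proof (rule inj_onI)
    fix u v assume u: "u \<in> ?I" and v: "v \<in> ?I" and eq: "f u = f v"
    obtain c d where cd: "f u = shift (rect a b) c d" using shifts f [OF u] by blast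
    obtain i j i' j' where uv: "u = (i, j)" "v = (i', j')" by fastforce
    have "shift (rect a b) c d \<inter> witness u \<noteq> {}" "shift (rect a b) c d \<inter> witness v \<noteq> {}"
      using f [OF u] f [OF v] eq cd by auto
    then have "\<bar>c - i * (2 * int a - 1)\<bar> < int a" "\<bar>d - j * (2 * int b - 1)\<bar> < int b"
      "\<bar>c - i' * (2 * int a - 1)\<bar> < int a" "\<bar>d - j' * (2 * int b - 1)\<bar> < int b"
      unfolding uv witness_def by (simp_all add: shift_rect_disjoint_iff [OF a b])
    then show "u = v" unfolding uv using near_multiple_unique by blast
  qed
  moreover have "finite S" using \<open>valid_arrangement n S\<close> by (rule finite_valid_arrangement)
  ultimately show ?thesis using f by (intro card_inj_on_le) auto
qed

definition clumsy_rect :: "nat \<Rightarrow> nat \<Rightarrow> nat \<Rightarrow> int \<times> int \<Rightarrow> cell set" where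
  "clumsy_rect n a b = (\<lambda>(i, j). shift (rect a b)
     (clumsy_offset (int a) (int n - int a) i) (clumsy_offset (int b) (int n - int b) j))"

lemma clumsy_rect_subset_board:
  assumes "1 \<le> a" "1 \<le> b" "a \<le> n" "b \<le> n" "u \<in> slots n a \<times> slots n b"
  shows "clumsy_rect n a b u \<subseteq> board n"
proof -
  obtain i j where u: "u = (i, j)" "0 \<le> i" "0 \<le> j"
    using assms(5) by (auto simp: slots_def)
  then show ?thesis
    using assms clumsy_offset_bounds [of "int a" "int n - int a" i]
      clumsy_offset_bounds [of "int b" "int n - int b" j]
    by (simp add: clumsy_rect_def shift_rect_subset_board_iff)
qed

lemma clumsy_rect_disjoint:
  assumes "1 \<le> a" "1 \<le> b" "u \<in> slots n a \<times> slots n b" "v \<in> slots n a \<times> slots n b" "u \<noteq> v"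
  shows "clumsy_rect n a b u \<inter> clumsy_rect n a b v = {}"
proof -
  obtain i j i' j' where uv: "u = (i, j)" "v = (i', j')" by fastforce
  let ?x = "clumsy_offset (int a) (int n - int a)" and ?y = "clumsy_offset (int b) (int n - int b)"
  have "int a \<le> \<bar>?x i - ?x i'\<bar> \<or> int b \<le> \<bar>?y j - ?y j'\<bar>"
    using assms clumsy_offset_separated [of "int a" i "int n - int a" i']
      clumsy_offset_separated [of "int b" j "int n - int b" j']
    unfolding uv slots_def by auto
  then show ?thesis using assms unfolding uv clumsy_rect_def by (simp add: shift_rect_disjoint_iff)
qed

lemma clumsy_rect_blocks:
  assumes "1 \<le> a" "1 \<le> b" "shift (rect a b) c d \<subseteq> board n"
  shows "\<exists>u\<in>slots n a \<times> slots n b. clumsy_rect n a b u \<inter> shift (rect a b) c d \<noteq> {}"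
proof -
  have c: "0 \<le> c" "c \<le> int n - int a" and d: "0 \<le> d" "d \<le> int n - int b"
    using assms by (simp_all add: shift_rect_subset_board_iff)
  let ?u = "(c div (2 * int a - 1), d div (2 * int b - 1))"
  have "?u \<in> slots n a \<times> slots n b"
    using c d assms by (simp add: slots_def pos_imp_zdiv_nonneg_iff zdiv_mono1)
  moreover have "clumsy_rect n a b ?u \<inter> shift (rect a b) c d \<noteq> {}"
    using clumsy_offset_near [of "int a" c "int n - int a"]
      clumsy_offset_near [of "int b" d "int n - int b"] c d assms
    by (simp add: clumsy_rect_def shift_rect_disjoint_iff abs_minus_commute)
  ultimately show ?thesis by blast
qed

lemma ex_fixed_packing_rect_card_slots:
  assumes "1 \<le> a" "1 \<le> b" "a \<le> n" "b \<le> n"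
  shows "\<exists>S. fixed_packing n (rect a b) S \<and> card S = card (slots n a \<times> slots n b)"
proof -
  let ?I = "slots n a \<times> slots n b"
  have "valid_arrangement n (clumsy_rect n a b ` ?I)"
    unfolding valid_arrangement_def
    using clumsy_rect_subset_board [OF assms] clumsy_rect_disjoint [OF assms(1,2)] by blast
  moreover have "\<forall>Q\<in>clumsy_rect n a b ` ?I. \<exists>c d. Q = shift (rect a b) c d"
    by (auto simp: clumsy_rect_def)
  moreover have "\<exists>Q\<in>clumsy_rect n a b ` ?I. Q \<inter> shift (rect a b) c d \<noteq> {}"
    if "shift (rect a b) c d \<subseteq> board n" for c d
    using clumsy_rect_blocks [OF assms(1,2) that] by blast
  moreover have "rect a b \<noteq> {}" using assms by simp
  ultimately have "fixed_packing n (rect a b) (clumsy_rect n a b ` ?I)"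
    by (simp add: fixed_packing_iff_blocking)
  moreover have "inj_on (clumsy_rect n a b) ?I"
  proof (rule inj_onI)
    fix u v assume "u \<in> ?I" "v \<in> ?I" "clumsy_rect n a b u = clumsy_rect n a b v"
    moreover have "clumsy_rect n a b u \<noteq> {}"
      using assms by (simp add: clumsy_rect_def split: prod.splits)
    ultimately show "u = v" using clumsy_rect_disjoint [OF assms(1,2)] by fastforce
  qed
  ultimately show ?thesis using card_image by blast
qed

lemma card_slots:
  assumes "1 \<le> a" "a \<le> n"
  shows "int (card (slots n a)) = \<lceil>(real n - real a + 1) / (2 * real a - 1)\<rceil>"
proof -
  have "int (card (slots n a)) = (int n - int a) div (2 * int a - 1) + 1"
    using assms by (simp add: slots_def pos_imp_zdiv_nonneg_iff)
  also have "\<dots> = \<lceil>real_of_int (int n - int a + 1) / of_int (2 * int a - 1)\<rceil>"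
    by (rule ceiling_of_int_succ_divide [symmetric]) (use assms in simp)
  finally show ?thesis by simp
qed

lemma cp_fixed_rect:
  assumes "1 \<le> a" "1 \<le> b"
  shows "cp_fixed (rect a b) = card (slots (a * b) a) * card (slots (a * b) b)"
  unfolding cp_fixed_def card_rect
proof (rule Least_equality)
  have "a \<le> a * b" "b \<le> a * b" using assms by simp_all
  then show "\<exists>S. fixed_packing (a * b) (rect a b) S \<and>
      card S = card (slots (a * b) a) * card (slots (a * b) b)"
    using ex_fixed_packing_rect_card_slots [OF assms] by (simp add: card_cartesian_product)
next
  fix k assume "\<exists>S. fixed_packing (a * b) (rect a b) S \<and> card S = k"
  then show "card (slots (a * b) a) * card (slots (a * b) b) \<le> k"
    using card_slots_le_card_fixed_packing_rect [OF assms] by (auto simp: card_cartesian_product)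
qed

theorem theorem2:
  fixes a b :: nat
  assumes "a \<ge> 2" and "b \<ge> 2"
  shows "real (cp_fixed (rect a b)) =
    real_of_int (\<lceil>(real a * real b - real a + 1) / (2 * real a - 1)\<rceil>
               * \<lceil>(real a * real b - real b + 1) / (2 * real b - 1)\<rceil>)"
proof -
  have "1 \<le> a" "1 \<le> b" "a \<le> a * b" "b \<le> a * b" using assms by simp_all
  then have "int (card (slots (a * b) a)) = \<lceil>(real a * real b - real a + 1) / (2 * real a - 1)\<rceil>"
    "int (card (slots (a * b) b)) = \<lceil>(real a * real b - real b + 1) / (2 * real b - 1)\<rceil>"
    using card_slots [of a "a * b"] card_slots [of b "a * b"] by simp_all
  moreover have "real (cp_fixed (rect a b)) =
      real_of_int (int (card (slots (a * b) a)) * int (card (slots (a * b) b)))"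
    using cp_fixed_rect [OF \<open>1 \<le> a\<close> \<open>1 \<le> b\<close>] by simp
  ultimately show ?thesis by simp
qed

end
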